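(* Every finite $2$-group $G$ is mixable, and $\mathrm{mixlen}(G)=\log_2|G|$.
   Context: For a finite group $G$, a random subproduct is a random element $g_1^{\epsilon_1}\cdots g_k^{\epsilon_k}$ where $g_1,\dots,g_k\in G$ are fixed and $\epsilon_1,\dots,\epsilon_k$ are independent Bernoulli random variables with $\epsilon_i\sim\mathrm{Ber}(p_i)$, $p_i\in[0,1]$. $G$ is called mixable if some random subproduct is distributed exactly uniformly on $G$; the sequence $(g_1,p_1),\dots,(g_k,p_k)$ is then a mixing sequence of length $k$. The mixing length $\mathrm{mixlen}(G)$ is the minimal length of a mixing sequence of $G$. *)

theory Defs
  imports "HOL-Algebra.Group" Complex_Main
begin

text \<open>The random subproduct g_1^e_1 ... g_k^e_k for a fixed outcome es of the
  Bernoulli variables (True = exponent 1, False = exponent 0).\<close>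
definition subprod :: "('a, 'b) monoid_scheme \<Rightarrow> 'a list \<Rightarrow> bool list \<Rightarrow> 'a" where
  "subprod G gs es =
     foldr (\<lambda>x acc. x \<otimes>\<^bsub>G\<^esub> acc)
           (map2 (\<lambda>g e. if e then g else \<one>\<^bsub>G\<^esub>) gs es) \<one>\<^bsub>G\<^esub>"

definition outcome_prob :: "real list \<Rightarrow> bool list \<Rightarrow> real" where
  "outcome_prob ps es = (\<Prod>i<length es. if es ! i then ps ! i else 1 - ps ! i)"

definition subprod_prob :: "('a, 'b) monoid_scheme \<Rightarrow> 'a list \<Rightarrow> real list \<Rightarrow> 'a \<Rightarrow> real" where
  "subprod_prob G gs ps x =
     (\<Sum>es\<in>{es. length es = length gs}. if subprod G gs es = x then outcome_prob ps es else 0)"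

definition mixing_sequence :: "('a, 'b) monoid_scheme \<Rightarrow> 'a list \<Rightarrow> real list \<Rightarrow> bool" where
  "mixing_sequence G gs ps \<longleftrightarrow>
     length gs = length ps \<and> set gs \<subseteq> carrier G \<and> (\<forall>p\<in>set ps. 0 \<le> p \<and> p \<le> 1) \<and>
     (\<forall>x\<in>carrier G. subprod_prob G gs ps x = 1 / real (card (carrier G)))"

definition mixable :: "('a, 'b) monoid_scheme \<Rightarrow> bool" where
  "mixable G \<longleftrightarrow> (\<exists>gs ps. mixing_sequence G gs ps)"

definition mixlen :: "('a, 'b) monoid_scheme \<Rightarrow> nat" where
  "mixlen G = (LEAST k. \<exists>gs ps. mixing_sequence G gs ps \<and> length gs = k)"

end

theory Submission
  imports Defs "HOL-Algebra.Sylow" "HOL-Algebra.Left_Coset"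
begin

(* By Sylow's theorem a group of order 2^(k+1) has a subgroup Q of order 2^k, and G = Q \<union> gQ
   for any g outside Q. Inductively, a group of order 2^n has elements g_1, ..., g_n whose 2^n
   subproducts enumerate it without repetition, so with all p_i = 1/2 the random subproduct is
   uniform. Conversely, every element has positive probability under a mixing sequence of
   length k, so it is one of the at most 2^k subproducts, whence 2^n \<le> 2^k. *)

lemma subprod_Nil [simp]: "subprod G [] es = \<one>\<^bsub>G\<^esub>"
  by (simp add: subprod_def)

lemma subprod_Nil2 [simp]: "subprod G gs [] = \<one>\<^bsub>G\<^esub>"
  by (simp add: subprod_def)

lemma subprod_Cons [simp]:
  "subprod G (g # gs) (e # es) = (if e then g else \<one>\<^bsub>G\<^esub>) \<otimes>\<^bsub>G\<^esub> subprod G gs es"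
  by (simp add: subprod_def)

lemma subprod_carrier_update [simp]: "subprod (G\<lparr>carrier := H\<rparr>) = subprod G"
  by (simp add: subprod_def fun_eq_iff cong: if_cong)

lemma (in monoid) subprod_closed: "set gs \<subseteq> carrier G \<Longrightarrow> subprod G gs es \<in> carrier G"
proof (induction gs arbitrary: es)
  case (Cons g gs)
  then show ?case
    by (cases es) auto
qed simp

lemma finite_bool_lists: "finite {es :: bool list. length es = k}"
  using finite_lists_length_eq[of "UNIV :: bool set" k] by simp

lemma card_bool_lists: "card {es :: bool list. length es = k} = 2 ^ k"
  using card_lists_length_eq[of "UNIV :: bool set" k] by simp

lemma bool_lists_Suc:
  "{es :: bool list. length es = Suc k} =
    (#) False ` {es. length es = k} \<union> (#) True ` {es. length es = k}"
  by (auto simp: length_Suc_conv image_iff)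

lemma (in monoid) subprod_Cons_image:
  assumes "g \<in> carrier G" "set gs \<subseteq> carrier G"
  shows "subprod G (g # gs) ` {es. length es = Suc k} =
    subprod G gs ` {es. length es = k} \<union> (g <#\<^bsub>G\<^esub> subprod G gs ` {es. length es = k})"
proof -
  let ?L = "{es :: bool list. length es = k}"
  have "(\<lambda>es. subprod G (g # gs) (False # es)) ` ?L = subprod G gs ` ?L"
    using subprod_closed[OF assms(2)] by simp
  moreover have "(\<lambda>es. subprod G (g # gs) (True # es)) ` ?L = g <#\<^bsub>G\<^esub> subprod G gs ` ?L"
    by (auto simp: l_coset_def)
  ultimately show ?thesis
    by (simp add: bool_lists_Suc image_Un image_image)
qed

lemma (in group) carrier_eq_Un_lcoset_if_index_two:
  assumes "finite (carrier G)" "subgroup Q G" "card (carrier G) = 2 * card Q"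
    and "g \<in> carrier G" "g \<notin> Q"
  shows "carrier G = Q \<union> (g <#\<^bsub>G\<^esub> Q)"
proof -
  interpret Q: subgroup Q G
    by fact
  have "card Q \<noteq> 0"
    using Q.one_closed card_0_eq[OF finite_subset[OF Q.subset assms(1)]] by blast
  then have two: "card (lcosets Q) = 2"
    using l_lagrange[OF assms(1,2)] assms(3) by (simp add: order_def)
  have "Q = \<one> <#\<^bsub>G\<^esub> Q"
    using lcos_mult_one[OF Q.subset] by simp
  then have sub: "{Q, g <#\<^bsub>G\<^esub> Q} \<subseteq> lcosets Q"
    using assms(4) unfolding LCOSETS_def by blast
  have "Q \<noteq> g <#\<^bsub>G\<^esub> Q"
    using lcos_self[OF assms(4,2)] assms(5) by blast
  then have "card {Q, g <#\<^bsub>G\<^esub> Q} = card (lcosets Q)"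
    using two by simp
  then have "lcosets Q = {Q, g <#\<^bsub>G\<^esub> Q}"
    using card_subset_eq[OF card_ge_0_finite sub] two by simp
  then show ?thesis
    using lcosets_part_G[OF assms(2)] by simp
qed

lemma ex_subprod_onto_carrier:
  assumes "group G" "card (carrier G) = 2 ^ k"
  shows "\<exists>gs. length gs = k \<and> set gs \<subseteq> carrier G \<and>
    subprod G gs ` {es. length es = k} = carrier G"
  using assms
proof (induction k arbitrary: G)
  case 0
  then interpret group G
    by simp
  have "carrier G = {\<one>\<^bsub>G\<^esub>}"
    using 0 one_closed by (metis card_1_singletonE singletonD power_0)
  then show ?case
    by (intro exI[of _ "[]"]) auto
next
  case (Suc k)
  interpret group G
    by fact
  have fin: "finite (carrier G)"
    using Suc.prems(2) card.infinite by fastforce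
  obtain Q where Q: "subgroup Q G" "card Q = 2 ^ k"
    using sylow_thm[of 2 G k 2] Suc.prems fin by (auto simp: order_def)
  obtain gs where gs: "length gs = k" "set gs \<subseteq> Q" "subprod G gs ` {es. length es = k} = Q"
    using Suc.IH[OF subgroup.subgroup_is_group[OF Q(1) is_group]] Q(2) by auto
  have "Q \<noteq> carrier G"
    using Q(2) Suc.prems(2) by auto
  then obtain g where g: "g \<in> carrier G" "g \<notin> Q"
    using subgroup.subset[OF Q(1)] by blast
  have "carrier G = Q \<union> (g <#\<^bsub>G\<^esub> Q)"
    using fin Q g Suc.prems(2) by (intro carrier_eq_Un_lcoset_if_index_two) auto
  then show ?case
    using subprod_Cons_image[of g gs k] gs g subgroup.subset[OF Q(1)]
    by (intro exI[of _ "g # gs"]) auto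
qed

lemma outcome_prob_replicate_half:
  assumes "length es = k"
  shows "outcome_prob (replicate k (1/2)) es = 1 / 2 ^ k"
proof -
  have "outcome_prob (replicate k (1/2)) es = (\<Prod>i<k. 1/2)"
    unfolding outcome_prob_def using assms by (intro prod.cong) auto
  then show ?thesis
    by (simp add: power_one_over)
qed

lemma subprod_prob_replicate_half:
  assumes "inj_on (subprod G gs) {es. length es = length gs}"
    and "x \<in> subprod G gs ` {es. length es = length gs}"
  shows "subprod_prob G gs (replicate (length gs) (1/2)) x = 1 / 2 ^ length gs"
proof -
  let ?L = "{es :: bool list. length es = length gs}"
  obtain e0 where e0: "e0 \<in> ?L" "subprod G gs e0 = x"
    using assms(2) by blast
  have "subprod G gs es = x \<longleftrightarrow> es = e0" if "es \<in> ?L" for es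
    using assms(1) e0 that by (auto dest: inj_onD)
  then have "subprod_prob G gs (replicate (length gs) (1/2)) x =
      (\<Sum>es\<in>?L. if es = e0 then 1 / 2 ^ length gs else 0)"
    unfolding subprod_prob_def by (intro sum.cong) (auto simp: outcome_prob_replicate_half)
  also have "\<dots> = 1 / 2 ^ length gs"
    using e0(1) finite_bool_lists by simp
  finally show ?thesis .
qed

lemma mixing_sequence_replicate_half:
  assumes "set gs \<subseteq> carrier G" "subprod G gs ` {es. length es = length gs} = carrier G"
    and "card (carrier G) = 2 ^ length gs"
  shows "mixing_sequence G gs (replicate (length gs) (1/2))"
proof -
  have "inj_on (subprod G gs) {es. length es = length gs}"
    using assms(2,3) by (simp add: inj_on_iff_eq_card finite_bool_lists card_bool_lists)
  then show ?thesis
    using assms unfolding mixing_sequence_def by (auto simp: subprod_prob_replicate_half)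
qed

lemma subprod_prob_outside_image:
  "x \<notin> subprod G gs ` {es. length es = length gs} \<Longrightarrow> subprod_prob G gs ps x = 0"
  unfolding subprod_prob_def by (intro sum.neutral) auto

lemma card_carrier_le_mixing_length:
  assumes "mixing_sequence G gs ps"
  shows "card (carrier G) \<le> 2 ^ length gs"
proof (cases "card (carrier G) = 0")
  case False
  have "x \<in> subprod G gs ` {es. length es = length gs}" if x: "x \<in> carrier G" for x
  proof (rule ccontr)
    assume "x \<notin> subprod G gs ` {es. length es = length gs}"
    then have "subprod_prob G gs ps x = 0"
      by (rule subprod_prob_outside_image)
    moreover have "subprod_prob G gs ps x = 1 / card (carrier G)"
      using assms x by (simp add: mixing_sequence_def)
    ultimately show False
      using False by simp
  qed
  then have "card (carrier G) \<le> card (subprod G gs ` {es. length es = length gs})"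
    by (intro card_mono subsetI) (simp_all add: finite_bool_lists)
  also have "\<dots> \<le> 2 ^ length gs"
    using card_image_le[OF finite_bool_lists] card_bool_lists by metis
  finally show ?thesis .
qed simp

theorem mainTheorem1:
  fixes G :: "('a, 'b) monoid_scheme" and n :: nat
  assumes "group G" and "finite (carrier G)" and "card (carrier G) = 2 ^ n"
  shows "mixable G \<and> mixlen G = n"
proof -
  obtain gs where gs: "length gs = n" "set gs \<subseteq> carrier G"
      "subprod G gs ` {es. length es = n} = carrier G"
    using ex_subprod_onto_carrier assms(1,3) by blast
  then have mix: "mixing_sequence G gs (replicate n (1/2))"
    using mixing_sequence_replicate_half[of gs G] assms(3) by simp
  have "mixlen G = n"
    unfolding mixlen_def
  proof (rule Least_equality)
    show "\<exists>gs ps. mixing_sequence G gs ps \<and> length gs = n"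
      using mix gs(1) by blast
  next
    fix k
    assume "\<exists>gs ps. mixing_sequence G gs ps \<and> length gs = k"
    then have "(2::nat) ^ n \<le> 2 ^ k"
      using card_carrier_le_mixing_length assms(3) by metis
    then show "n \<le> k"
      by simp
  qed
  then show ?thesis
    using mix by (auto simp: mixable_def)
qed

end
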